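(* Let $I(z)$ be a nonzero polynomial solution of the KZ system over $\mathbb{F}_p$ and let $C z_1^{d_1}\cdots z_n^{d_n}$, $C=(C_1,\dots,C_n)\in\mathbb{F}_p^n$, be its $\mathrm{id}$-leading term. Then, with $C$ as a column vector and equalities in $\mathbb{F}_p$, $$\sum_{j=1}^nm_jC_j=0,\qquad \sum_{l=j+1}^n\Omega_{jl}C=q\,d_j\,C\ \ (j=1,\dots,n-1),\qquad d_n\equiv0\pmod p.$$
   Context: Let $p,q$ be primes and $n$ a positive integer with $p>n\ge2$, $p>q$. Fix positive integers $m_1,\dots,m_n<q$. For $i\ne j$ let $\Omega_{ij}$ be the $n\times n$ matrix whose only nonzero entries are $(\Omega_{ij})_{ii}=-m_j$, $(\Omega_{ij})_{ij}=m_j$, $(\Omega_{ij})_{ji}=m_i$, $(\Omega_{ij})_{jj}=-m_i$. A polynomial solution of the KZ system over $\mathbb{F}_p$ is $I(z)=(I_1,\dots,I_n)\in\mathbb{F}_p[z_1,\dots,z_n]^n$ with $\partial I/\partial z_i=q^{-1}\sum_{j\ne i}\Omega_{ij}I/(z_i-z_j)$ for all $i$ and $\sum_im_iI_i=0$ (computed in $\mathbb{F}_p$). Monomials $z^d$ are ordered lexicographically by $(d_1,\dots,d_n)$ (so $z_1>\dots>z_n$); the $\mathrm{id}$-leading term of a nonzero $f\in\mathbb{F}_p[z]^n$ is $a z^d$ with $z^d$ the largest monomial having nonzero coefficient $a\in\mathbb{F}_p^n$. *)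

theory Defs
  imports "HOL-Library.Poly_Mapping" "Berlekamp_Zassenhaus.Finite_Field"
begin

(* Multivariate polynomials over a ring 'a in variables z_0, z_1, ... (variable z_k of the
   paper is index k-1 here): a monomial is an exponent vector  nat \<Rightarrow>\<^sub>0 nat,
   a polynomial is a finitely supported map from monomials to coefficients. *)
type_synonym 'a mpoly = "(nat \<Rightarrow>\<^sub>0 nat) \<Rightarrow>\<^sub>0 'a"

definition Var :: "nat \<Rightarrow> 'a::comm_semiring_1 mpoly" where
  "Var k = Poly_Mapping.single (Poly_Mapping.single k 1) 1"

definition Const :: "'a::comm_semiring_1 \<Rightarrow> 'a mpoly" where
  "Const c = Poly_Mapping.single 0 c"

definition in_vars :: "nat \<Rightarrow> 'a::zero mpoly \<Rightarrow> bool" where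
  "in_vars n f \<longleftrightarrow> (\<forall>a\<in>Poly_Mapping.keys f. Poly_Mapping.keys a \<subseteq> {..<n})"

definition pderiv_mv :: "nat \<Rightarrow> 'a::comm_semiring_1 mpoly \<Rightarrow> 'a mpoly" where
  "pderiv_mv k f = (\<Sum>a\<in>Poly_Mapping.keys f.
      Poly_Mapping.single (a - Poly_Mapping.single k 1) (of_nat (Poly_Mapping.lookup a k) * Poly_Mapping.lookup f a))"

definition Omega :: "(nat \<Rightarrow> nat) \<Rightarrow> nat \<Rightarrow> nat \<Rightarrow> nat \<Rightarrow> nat \<Rightarrow> 'a::comm_ring_1" where
  "Omega m i j a b =
     (if a = i \<and> b = i then - of_nat (m j)
      else if a = i \<and> b = j then of_nat (m j)
      else if a = j \<and> b = i then of_nat (m i)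
      else if a = j \<and> b = j then - of_nat (m i)
      else 0)"

(* KZ system over F_p with denominators cleared: for each i, and each component a,
   q * (prod_{k\<noteq>i}(z_i-z_k)) * dI_a/dz_i
     = sum_{j\<noteq>i} (Omega_{ij} I)_a * prod_{k\<noteq>i,j}(z_i-z_k),
   which is equivalent (in F_p(z)) to dI/dz_i = q^{-1} sum_{j\<noteq>i} Omega_{ij} I/(z_i-z_j). *)
definition KZ_solution ::
  "nat \<Rightarrow> nat \<Rightarrow> (nat \<Rightarrow> nat) \<Rightarrow> (nat \<Rightarrow> 'a::field mpoly) \<Rightarrow> bool" where
  "KZ_solution n q m I \<longleftrightarrow>
     (\<forall>a<n. in_vars n (I a)) \<and>
     (\<forall>i<n. \<forall>a<n.
        of_nat q * (\<Prod>k\<in>{..<n}-{i}. Var i - Var k) * pderiv_mv i (I a) =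
        (\<Sum>j\<in>{..<n}-{i}. (\<Sum>b<n. Const (Omega m i j a b) * I b) *
            (\<Prod>k\<in>{..<n}-{i,j}. Var i - Var k))) \<and>
     (\<Sum>a<n. of_nat (m a) * I a) = 0"

definition lex_less :: "nat \<Rightarrow> (nat \<Rightarrow>\<^sub>0 nat) \<Rightarrow> (nat \<Rightarrow>\<^sub>0 nat) \<Rightarrow> bool" where
  "lex_less n a b \<longleftrightarrow> (\<exists>k<n. (\<forall>l<k. Poly_Mapping.lookup a l = Poly_Mapping.lookup b l) \<and> Poly_Mapping.lookup a k < Poly_Mapping.lookup b k)"

definition id_leading_monomial ::
  "nat \<Rightarrow> (nat \<Rightarrow> 'a::zero mpoly) \<Rightarrow> (nat \<Rightarrow>\<^sub>0 nat) \<Rightarrow> bool" where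
  "id_leading_monomial n I d \<longleftrightarrow>
     (\<exists>a<n. Poly_Mapping.lookup (I a) d \<noteq> 0) \<and>
     (\<forall>e. (\<exists>a<n. Poly_Mapping.lookup (I a) e \<noteq> 0) \<longrightarrow> e = d \<or> lex_less n e d)"

end

theory Submission
  imports Defs
begin

(* Multiplying the i-th KZ equation (denominators cleared) by z_i turns its left-hand side into
   q P_i (z_i d/dz_i) I_a with P_i = prod_{k <> i} (z_i - z_k); the Euler operator z_i d/dz_i scales
   z^e by e_i, and P_i has lex-leading term (-1)^(i-1) z^L with L = sum_{k <> i} z_{min(i,k)}.
   Compare coefficients of z^(d+L). On the left this is (-1)^(i-1) q d_i C_a. On the right, the
   summand (Omega_ij I)_a z_i prod_{k <> i,j} (z_i - z_k) has leading monomial z^(d+L) with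
   coefficient (-1)^(i-1) (Omega_ij C)_a when j > i, and a lex-smaller one when j < i, because
   there z_i takes the place of z_j. For i = n the right-hand side vanishes and q is a unit mod p,
   so p divides d_n. The relation sum m_j C_j = 0 is the coefficient of z^d in sum m_j I_j = 0.
   Indices here run from 1 as in the paper; below they run from 0, so the sign is (-1)^i. *)

lemma lex_less_irrefl: "\<not> lex_less n a a"
  by (auto simp: lex_less_def)

lemma lex_less_trans:
  assumes "lex_less n a b" "lex_less n b c"
  shows "lex_less n a c"
proof -
  obtain k1 where k1: "k1 < n" "\<forall>l<k1. Poly_Mapping.lookup a l = Poly_Mapping.lookup b l"
      "Poly_Mapping.lookup a k1 < Poly_Mapping.lookup b k1"
    using assms(1) by (auto simp: lex_less_def)
  obtain k2 where k2: "k2 < n" "\<forall>l<k2. Poly_Mapping.lookup b l = Poly_Mapping.lookup c l"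
      "Poly_Mapping.lookup b k2 < Poly_Mapping.lookup c k2"
    using assms(2) by (auto simp: lex_less_def)
  have "\<forall>l<min k1 k2. Poly_Mapping.lookup a l = Poly_Mapping.lookup c l"
    using k1(2) k2(2) by simp
  moreover have "Poly_Mapping.lookup a (min k1 k2) < Poly_Mapping.lookup c (min k1 k2)"
    using k1 k2 by (cases k1 k2 rule: linorder_cases) auto
  ultimately show ?thesis
    using k1(1) unfolding lex_less_def by (intro exI[of _ "min k1 k2"]) auto
qed

lemma lex_less_add_right: "lex_less n a b \<Longrightarrow> lex_less n (a + c) (b + c)"
  by (auto simp: lex_less_def lookup_add)

lemma lex_less_add_left: "lex_less n a b \<Longrightarrow> lex_less n (c + a) (c + b)"
  by (simp add: add.commute lex_less_add_right)

definition lex_le :: "nat \<Rightarrow> (nat \<Rightarrow>\<^sub>0 nat) \<Rightarrow> (nat \<Rightarrow>\<^sub>0 nat) \<Rightarrow> bool" where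
  "lex_le n a b \<longleftrightarrow> a = b \<or> lex_less n a b"

lemma lex_le_less_trans: "lex_le n a b \<Longrightarrow> lex_less n b c \<Longrightarrow> lex_less n a c"
  unfolding lex_le_def using lex_less_trans by blast

lemma lex_le_add_less:
  assumes "lex_le n a D" "lex_le n b E" "lex_less n a D \<or> lex_less n b E"
  shows "lex_less n (a + b) (D + E)"
  using assms lex_less_add_left lex_less_add_right lex_less_trans unfolding lex_le_def by metis

lemma lex_le_add: "lex_le n a D \<Longrightarrow> lex_le n b E \<Longrightarrow> lex_le n (a + b) (D + E)"
  using lex_le_add_less unfolding lex_le_def by blast

lemma lex_le_add_eq:
  assumes "lex_le n a D" "lex_le n b E" "a + b = D + E"
  shows "a = D \<and> b = E"
  using lex_le_add_less[OF assms(1,2)] assms lex_less_irrefl unfolding lex_le_def by metis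

lemma lex_less_single: "i < k \<Longrightarrow> i < n \<Longrightarrow> lex_less n (Poly_Mapping.single k 1) (Poly_Mapping.single i 1)"
  unfolding lex_less_def by (intro exI[of _ i]) (auto simp: lookup_single when_def)

definition lex_bounded :: "nat \<Rightarrow> 'a::zero mpoly \<Rightarrow> (nat \<Rightarrow>\<^sub>0 nat) \<Rightarrow> bool" where
  "lex_bounded n f D \<longleftrightarrow> (\<forall>e\<in>Poly_Mapping.keys f. lex_le n e D)"

lemma lex_bounded_single: "lex_bounded n (Poly_Mapping.single D c) D"
  by (simp add: lex_bounded_def lex_le_def)

lemma lex_bounded_lookup_eq_0: "lex_bounded n f D \<Longrightarrow> lex_less n D D' \<Longrightarrow> Poly_Mapping.lookup f D' = 0"
  unfolding lex_bounded_def using lex_le_less_trans lex_less_irrefl in_keys_iff by metis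

lemma lex_bounded_diff:
  "lex_bounded n f D \<Longrightarrow> lex_bounded n g D \<Longrightarrow> lex_bounded n (f - g :: 'a::ab_group_add mpoly) D"
  using keys_diff[of f g] unfolding lex_bounded_def by blast

lemma lex_bounded_sum:
  "(\<And>x. x \<in> A \<Longrightarrow> lex_bounded n (f x) D) \<Longrightarrow> lex_bounded n (sum f A) D"
  using keys_sum[of f A] unfolding lex_bounded_def by blast

lemma lex_bounded_mult:
  fixes f g :: "'a::comm_semiring_1 mpoly"
  assumes "lex_bounded n f D" "lex_bounded n g E"
  shows "lex_bounded n (f * g) (D + E)"
  using assms keys_mult[of f g] lex_le_add unfolding lex_bounded_def by blast

lemma lookup_mult_lex_bounded:
  fixes f g :: "'a::comm_semiring_1 mpoly"
  assumes f: "lex_bounded n f D" and g: "lex_bounded n g E"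
  shows "Poly_Mapping.lookup (f * g) (D + E) = Poly_Mapping.lookup f D * Poly_Mapping.lookup g E"
proof -
  have only_D: "Sum_any (\<lambda>q. Poly_Mapping.lookup g q when D + E = l + q) = 0"
    if "l \<in> Poly_Mapping.keys f" "l \<noteq> D" for l
  proof -
    have "(Poly_Mapping.lookup g q when D + E = l + q) = 0" for q
      using lex_le_add_eq[of n l D q E] f g that
      by (cases "q \<in> Poly_Mapping.keys g") (auto simp: lex_bounded_def in_keys_iff when_def)
    then show ?thesis
      by simp
  qed
  have "Poly_Mapping.lookup f l * Sum_any (\<lambda>q. Poly_Mapping.lookup g q when D + E = l + q)
      = (Poly_Mapping.lookup f D * Poly_Mapping.lookup g E when l = D)" for l
    using only_D[of l] by (cases "l = D"; cases "Poly_Mapping.lookup f l = 0") (auto simp: in_keys_iff)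
  then have "Poly_Mapping.lookup (f * g) (D + E)
      = Sum_any (\<lambda>l. Poly_Mapping.lookup f D * Poly_Mapping.lookup g E when l = D)"
    by (simp only: lookup_mult)
  then show ?thesis
    by simp
qed

lemma lex_bounded_prod:
  fixes f :: "'b \<Rightarrow> 'a::comm_semiring_1 mpoly"
  assumes "\<And>k. k \<in> K \<Longrightarrow> lex_bounded n (f k) (D k)"
  shows "lex_bounded n (prod f K) (sum D K)"
  using assms
proof (induction K rule: infinite_finite_induct)
  case (insert k K)
  then show ?case
    by (simp add: lex_bounded_mult)
qed (simp_all add: lex_bounded_single flip: single_one)

lemma lookup_prod_lex_bounded:
  fixes f :: "'b \<Rightarrow> 'a::comm_semiring_1 mpoly"
  assumes "\<And>k. k \<in> K \<Longrightarrow> lex_bounded n (f k) (D k)"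
  shows "Poly_Mapping.lookup (prod f K) (sum D K) = (\<Prod>k\<in>K. Poly_Mapping.lookup (f k) (D k))"
  using assms
proof (induction K rule: infinite_finite_induct)
  case (insert k K)
  have "lex_bounded n (f k) (D k)" "lex_bounded n (prod f K) (sum D K)"
    using insert.prems by (simp_all add: lex_bounded_prod)
  from lookup_mult_lex_bounded[OF this] show ?case
    using insert by simp
qed (simp_all add: lookup_one)

lemma lookup_Const_mult: "Poly_Mapping.lookup (Const c * f) e = c * Poly_Mapping.lookup f e"
  by (simp add: Const_def flip: mult_map_scale_conv_mult) (simp add: map.rep_eq when_def)

lemma lex_bounded_Const_mult: "lex_bounded n f D \<Longrightarrow> lex_bounded n (Const c * f) D"
  unfolding lex_bounded_def by (metis in_keys_iff lookup_Const_mult mult_zero_right)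

lemma lookup_of_nat_mult:
  "Poly_Mapping.lookup (of_nat c * f :: 'a::comm_semiring_1 mpoly) e = of_nat c * Poly_Mapping.lookup f e"
  using lookup_Const_mult[of "of_nat c" f e] by (simp add: Const_def)

lemma lex_bounded_Var_diff:
  assumes "i < n" "k < n"
  shows "lex_bounded n (Var i - Var k :: 'a::comm_ring_1 mpoly) (Poly_Mapping.single (min i k) 1)"
proof -
  have "lex_le n (Poly_Mapping.single l 1) (Poly_Mapping.single (min i k) 1)" if "l \<in> {i, k}" for l
  proof (cases "l = min i k")
    case False
    then have "min i k < l"
      using that by auto
    then show ?thesis
      using lex_less_single[of "min i k" l n] assms by (simp add: lex_le_def)
  qed (simp add: lex_le_def)
  then show ?thesis
    unfolding Var_def by (intro lex_bounded_diff) (auto simp: lex_bounded_def)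
qed

lemma lookup_Var_diff:
  assumes "i \<noteq> k"
  shows "Poly_Mapping.lookup (Var i - Var k :: 'a::comm_ring_1 mpoly) (Poly_Mapping.single (min i k) 1)
    = (if i < k then 1 else -1)"
proof -
  have "Poly_Mapping.single i 1 \<noteq> Poly_Mapping.single k (1::nat)"
    using assms by (metis lookup_single_eq lookup_single_not_eq zero_neq_one)
  then show ?thesis
    using assms by (cases "i < k") (simp_all add: Var_def lookup_minus lookup_single_not_eq min_def)
qed

lemma
  assumes "i < n" "K \<subseteq> {..<n} - {i}"
  shows lex_bounded_prod_Var_diff:
      "lex_bounded n (\<Prod>k\<in>K. Var i - Var k :: 'a::comm_ring_1 mpoly) (\<Sum>k\<in>K. Poly_Mapping.single (min i k) 1)"
    and lookup_prod_Var_diff: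
      "Poly_Mapping.lookup (\<Prod>k\<in>K. Var i - Var k :: 'a::comm_ring_1 mpoly) (\<Sum>k\<in>K. Poly_Mapping.single (min i k) 1)
        = (-1) ^ card {k\<in>K. k < i}"
proof -
  have bounded: "lex_bounded n (Var i - Var k :: 'a mpoly) (Poly_Mapping.single (min i k) 1)" if "k \<in> K" for k
    using that assms by (intro lex_bounded_Var_diff) auto
  then show "lex_bounded n (\<Prod>k\<in>K. Var i - Var k :: 'a mpoly) (\<Sum>k\<in>K. Poly_Mapping.single (min i k) 1)"
    by (rule lex_bounded_prod)
  have "finite K"
    using assms(2) finite_subset by blast
  have "Poly_Mapping.lookup (\<Prod>k\<in>K. Var i - Var k :: 'a mpoly) (\<Sum>k\<in>K. Poly_Mapping.single (min i k) 1)
      = (\<Prod>k\<in>K. Poly_Mapping.lookup (Var i - Var k :: 'a mpoly) (Poly_Mapping.single (min i k) 1))"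
    by (rule lookup_prod_lex_bounded[OF bounded])
  also have "\<dots> = (\<Prod>k\<in>K. if k < i then -1 else 1)"
  proof (rule prod.cong[OF refl])
    fix k
    assume "k \<in> K"
    then have "i \<noteq> k"
      using assms(2) by auto
    then show "Poly_Mapping.lookup (Var i - Var k :: 'a mpoly) (Poly_Mapping.single (min i k) 1)
        = (if k < i then -1 else 1)"
      using lookup_Var_diff[of i k] by auto
  qed
  also have "\<dots> = (-1) ^ card {k\<in>K. k < i}"
    using \<open>finite K\<close> by (simp add: prod.inter_filter[symmetric])
  finally show "Poly_Mapping.lookup (\<Prod>k\<in>K. Var i - Var k :: 'a mpoly) (\<Sum>k\<in>K. Poly_Mapping.single (min i k) 1)
      = (-1) ^ card {k\<in>K. k < i}" .
qed

lemma Var_mult_pderiv_mv: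
  "Var i * pderiv_mv i (f :: 'a::comm_semiring_1 mpoly) =
     (\<Sum>e\<in>Poly_Mapping.keys f. Poly_Mapping.single e (of_nat (Poly_Mapping.lookup e i) * Poly_Mapping.lookup f e))"
  unfolding pderiv_mv_def Var_def sum_distrib_left
proof (rule sum.cong[OF refl])
  fix e :: "nat \<Rightarrow>\<^sub>0 nat"
  show "Poly_Mapping.single (Poly_Mapping.single i 1) 1 *
      Poly_Mapping.single (e - Poly_Mapping.single i 1) (of_nat (Poly_Mapping.lookup e i) * Poly_Mapping.lookup f e) =
      Poly_Mapping.single e (of_nat (Poly_Mapping.lookup e i) * Poly_Mapping.lookup f e)"
  proof (cases "Poly_Mapping.lookup e i = 0")
    case False
    then have "Poly_Mapping.single i 1 + (e - Poly_Mapping.single i 1) = e"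
      by (intro poly_mapping_eqI) (auto simp: lookup_add lookup_minus lookup_single when_def)
    then show ?thesis
      by (simp add: mult_single)
  qed (simp add: mult_single)
qed

lemma lookup_Var_mult_pderiv_mv:
  "Poly_Mapping.lookup (Var i * pderiv_mv i (f :: 'a::comm_semiring_1 mpoly)) e
    = of_nat (Poly_Mapping.lookup e i) * Poly_Mapping.lookup f e"
  by (auto simp: Var_mult_pderiv_mv lookup_sum lookup_single when_def in_keys_iff)

lemma lex_bounded_Var_mult_pderiv_mv:
  "lex_bounded n f D \<Longrightarrow> lex_bounded n (Var i * pderiv_mv i (f :: 'a::comm_semiring_1 mpoly)) D"
  unfolding lex_bounded_def by (metis in_keys_iff lookup_Var_mult_pderiv_mv mult_zero_right)

lemma lex_bounded_id_leading_monomial: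
  "id_leading_monomial n I d \<Longrightarrow> a < n \<Longrightarrow> lex_bounded n (I a) d"
  unfolding id_leading_monomial_def lex_bounded_def lex_le_def by (metis in_keys_iff)

lemma KZ_solution_Euler_form:
  assumes "KZ_solution n q m I" "i < n" "a < n"
  shows "of_nat q * (\<Prod>k\<in>{..<n}-{i}. Var i - Var k) * (Var i * pderiv_mv i (I a)) =
    (\<Sum>j\<in>{..<n}-{i}. (\<Sum>b<n. Const (Omega m i j a b) * I b) * (Var i * (\<Prod>k\<in>{..<n}-{i,j}. Var i - Var k)))"
proof -
  have "of_nat q * (\<Prod>k\<in>{..<n}-{i}. Var i - Var k) * pderiv_mv i (I a) =
      (\<Sum>j\<in>{..<n}-{i}. (\<Sum>b<n. Const (Omega m i j a b) * I b) * (\<Prod>k\<in>{..<n}-{i,j}. Var i - Var k))"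
    using assms unfolding KZ_solution_def by blast
  then have "Var i * (of_nat q * (\<Prod>k\<in>{..<n}-{i}. Var i - Var k) * pderiv_mv i (I a)) =
      Var i * (\<Sum>j\<in>{..<n}-{i}. (\<Sum>b<n. Const (Omega m i j a b) * I b) * (\<Prod>k\<in>{..<n}-{i,j}. Var i - Var k))"
    by simp
  then show ?thesis
    by (simp add: sum_distrib_left mult_ac)
qed

lemma lookup_KZ_summand:
  fixes A :: "'a::comm_ring_1 mpoly"
  assumes A: "lex_bounded n A d" and "i < n" "j < n" "j \<noteq> i"
  shows "Poly_Mapping.lookup (A * (Var i * (\<Prod>k\<in>{..<n}-{i,j}. Var i - Var k)))
      (d + (\<Sum>k\<in>{..<n}-{i}. Poly_Mapping.single (min i k) 1))
    = (if i < j then (-1) ^ i * Poly_Mapping.lookup A d else 0)"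
proof -
  define R :: "nat \<Rightarrow>\<^sub>0 nat" where "R = (\<Sum>k\<in>{..<n}-{i,j}. Poly_Mapping.single (min i k) 1)"
  have Var: "lex_bounded n (Var i :: 'a mpoly) (Poly_Mapping.single i 1)"
    unfolding Var_def by (rule lex_bounded_single)
  have prod: "lex_bounded n (\<Prod>k\<in>{..<n}-{i,j}. Var i - Var k :: 'a mpoly) R"
    unfolding R_def using assms by (intro lex_bounded_prod_Var_diff) auto
  have B: "lex_bounded n (Var i * (\<Prod>k\<in>{..<n}-{i,j}. Var i - Var k) :: 'a mpoly) (Poly_Mapping.single i 1 + R)"
    using Var prod by (rule lex_bounded_mult)
  have "{..<n}-{i} = insert j ({..<n}-{i,j})"
    using assms by auto
  then have L: "(\<Sum>k\<in>{..<n}-{i}. Poly_Mapping.single (min i k) 1) = Poly_Mapping.single (min i j) 1 + R"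
    unfolding R_def by simp
  show ?thesis
  proof (cases "i < j")
    case True
    have "{k\<in>{..<n}-{i,j}. k < i} = {..<i}"
      using True assms by auto
    then have "Poly_Mapping.lookup (\<Prod>k\<in>{..<n}-{i,j}. Var i - Var k :: 'a mpoly) R = (-1) ^ i"
      unfolding R_def using assms by (subst lookup_prod_Var_diff) auto
    moreover have "Poly_Mapping.lookup (Var i :: 'a mpoly) (Poly_Mapping.single i 1) = 1"
      by (simp add: Var_def)
    ultimately have "Poly_Mapping.lookup (Var i * (\<Prod>k\<in>{..<n}-{i,j}. Var i - Var k) :: 'a mpoly)
        (Poly_Mapping.single i 1 + R) = (-1) ^ i"
      using lookup_mult_lex_bounded[OF Var prod] by simp
    then show ?thesis
      using True lookup_mult_lex_bounded[OF A B] L by (simp add: min_def mult.commute)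
  next
    case False
    then have "j < i"
      using assms by simp
    then have "lex_less n (d + (Poly_Mapping.single i 1 + R)) (d + (\<Sum>k\<in>{..<n}-{i}. Poly_Mapping.single (min i k) 1))"
      unfolding L using assms by (intro lex_less_add_left lex_less_add_right lex_less_single) simp_all
    then show ?thesis
      using False lex_bounded_lookup_eq_0[OF lex_bounded_mult[OF A B]] by simp
  qed
qed

lemma KZ_solution_leading_coefficients:
  fixes I :: "nat \<Rightarrow> 'a::field mpoly"
  assumes KZ: "KZ_solution n q m I" and lead: "id_leading_monomial n I d" and i: "i < n" and a: "a < n"
  shows "of_nat q * of_nat (Poly_Mapping.lookup d i) * Poly_Mapping.lookup (I a) d
    = (\<Sum>j\<in>{i+1..<n}. \<Sum>b<n. Omega m i j a b * Poly_Mapping.lookup (I b) d)"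
proof -
  define L :: "nat \<Rightarrow>\<^sub>0 nat" where "L = (\<Sum>k\<in>{..<n}-{i}. Poly_Mapping.single (min i k) 1)"
  define P :: "'a mpoly" where "P = (\<Prod>k\<in>{..<n}-{i}. Var i - Var k)"
  define A where "A j = (\<Sum>b<n. Const (Omega m i j a b) * I b)" for j
  have bounded_I: "lex_bounded n (I b) d" if "b < n" for b
    using lead that by (rule lex_bounded_id_leading_monomial)
  have bounded_A: "lex_bounded n (A j) d" for j
    unfolding A_def by (intro lex_bounded_sum lex_bounded_Const_mult bounded_I) simp
  have P_bounded: "lex_bounded n P L"
    unfolding P_def L_def using i by (intro lex_bounded_prod_Var_diff) auto
  have "{k\<in>{..<n}-{i}. k < i} = {..<i}"
    using i by auto
  then have P_lookup: "Poly_Mapping.lookup P L = (-1) ^ i"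
    unfolding P_def L_def using i by (subst lookup_prod_Var_diff) auto
  have "(-1) ^ i * (of_nat q * of_nat (Poly_Mapping.lookup d i) * Poly_Mapping.lookup (I a) d)
      = of_nat q * (Poly_Mapping.lookup P L * Poly_Mapping.lookup (Var i * pderiv_mv i (I a)) d)"
    by (simp add: P_lookup lookup_Var_mult_pderiv_mv)
  also have "\<dots> = Poly_Mapping.lookup (of_nat q * P * (Var i * pderiv_mv i (I a))) (L + d)"
    unfolding mult.assoc lookup_of_nat_mult
    by (simp add: lookup_mult_lex_bounded[OF P_bounded lex_bounded_Var_mult_pderiv_mv[OF bounded_I[OF a]]])
  also have "\<dots> = (\<Sum>j\<in>{..<n}-{i}. Poly_Mapping.lookup (A j * (Var i * (\<Prod>k\<in>{..<n}-{i,j}. Var i - Var k))) (d + L))"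
    unfolding P_def A_def KZ_solution_Euler_form[OF KZ i a] by (simp add: lookup_sum add.commute)
  also have "\<dots> = (\<Sum>j\<in>{..<n}-{i}. if i < j then (-1) ^ i * Poly_Mapping.lookup (A j) d else 0)"
    unfolding L_def using i
    by (intro sum.cong refl lookup_KZ_summand bounded_A) auto
  also have "\<dots> = (-1) ^ i * (\<Sum>j\<in>{i+1..<n}. Poly_Mapping.lookup (A j) d)"
  proof -
    have "{j\<in>{..<n}-{i}. i < j} = {i+1..<n}"
      by auto
    then show ?thesis
      by (simp add: sum.inter_filter[symmetric] sum_distrib_left)
  qed
  finally show ?thesis
    by (simp add: A_def lookup_sum lookup_Const_mult)
qed

lemma KZ_solution_lookup_relation:
  assumes "KZ_solution n q m I"
  shows "(\<Sum>a<n. of_nat (m a) * Poly_Mapping.lookup (I a) e) = 0"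
proof -
  have "(\<Sum>a<n. of_nat (m a) * I a) = 0"
    using assms unfolding KZ_solution_def by blast
  then have "Poly_Mapping.lookup (\<Sum>a<n. of_nat (m a) * I a) e = 0"
    by simp
  then show ?thesis
    by (simp only: lookup_sum lookup_of_nat_mult)
qed

lemma of_nat_mod_ring_neq_0: "0 < k \<Longrightarrow> k < CARD('p::prime_card) \<Longrightarrow> of_nat k \<noteq> (0 :: 'p mod_ring)"
  using of_nat_0_mod_ring_dvd[of k, where 'a = 'p] by (meson dvd_imp_le not_le)

theorem lemma5p1:
  fixes n q :: nat and m :: "nat \<Rightarrow> nat"
    and I :: "nat \<Rightarrow> 'p::prime_card mod_ring mpoly"
    and d :: "nat \<Rightarrow>\<^sub>0 nat" and C :: "nat \<Rightarrow> 'p mod_ring"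
  assumes "prime q" and "CARD('p) > n" and "n \<ge> 2" and "CARD('p) > q"
    and "\<forall>i<n. 0 < m i \<and> m i < q"
    and "KZ_solution n q m I"
    and "\<exists>a<n. I a \<noteq> 0"
    and "id_leading_monomial n I d"
    and "\<forall>a<n. C a = Poly_Mapping.lookup (I a) d"
  shows "(\<Sum>j<n. of_nat (m j) * C j) = 0 \<and>
    (\<forall>j. j + 1 < n \<longrightarrow> (\<forall>a<n.
           (\<Sum>l\<in>{j+1..<n}. \<Sum>b<n. Omega m j l a b * C b) = of_nat q * of_nat (Poly_Mapping.lookup d j) * C a)) \<and>
    CARD('p) dvd Poly_Mapping.lookup d (n - 1)"
proof (intro conjI allI impI)
  show "(\<Sum>j<n. of_nat (m j) * C j) = 0"
    using KZ_solution_lookup_relation[OF assms(6), of d] assms(9) by simp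
next
  fix j a
  assume "j + 1 < n" "a < n"
  then show "(\<Sum>l\<in>{j+1..<n}. \<Sum>b<n. Omega m j l a b * C b) = of_nat q * of_nat (Poly_Mapping.lookup d j) * C a"
    using KZ_solution_leading_coefficients[OF assms(6,8), of j a] assms(9) by simp
next
  obtain a where a: "a < n" "C a \<noteq> 0"
    using assms(8,9) unfolding id_leading_monomial_def by auto
  have "of_nat q * of_nat (Poly_Mapping.lookup d (n - 1)) * C a = 0"
    using KZ_solution_leading_coefficients[OF assms(6,8), of "n - 1" a] assms(3,9) a by simp
  moreover have "of_nat q \<noteq> (0 :: 'p mod_ring)"
    using assms(1,4) by (simp add: of_nat_mod_ring_neq_0 prime_gt_0_nat)
  ultimately have "of_nat (Poly_Mapping.lookup d (n - 1)) = (0 :: 'p mod_ring)"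
    using a(2) by simp
  then show "CARD('p) dvd Poly_Mapping.lookup d (n - 1)"
    by (rule of_nat_0_mod_ring_dvd)
qed

end
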